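(* Let $n\ge3$ and let $a$ be an integer with $0\le a\le n-1$. The unidirectional cycle $\overrightarrow{C_n}$ is $D$-antimagic for each of the following sets $D$: (1) $D=\{a,(a+1)\bmod n\}$; (2) $D=\{a,(a+2)\bmod n\}$, provided $n\neq4$; (3) $D=\{a,(a+3)\bmod n\}$, provided $n\ge4$ and $n\neq6$; (4) $D=\{0,1,\dots,n-1\}\setminus\{a,(a+1)\bmod n\}$; (5) $D=\{0,1,\dots,n-1\}\setminus\{a,(a+2)\bmod n\}$, provided $n\neq4$; (6) $D=\{0,1,\dots,n-1\}\setminus\{a,(a+3)\bmod n\}$, provided $n\ge4$ and $n\neq6$. (In cases (4)–(6) it is assumed that $D$ is nonempty.)
   Context: An oriented graph is a simple graph each of whose edges is given one direction. For vertices $u,v$, $d(u,v)$ is the length of a shortest directed path from $u$ to $v$ ($d(u,u)=0$). For a set $D$ of nonnegative integers, $N_D(v)=\{y : d(v,y)\in D\}$; for a bijection $f:V\to\{1,\dots,|V|\}$, $\omega_D(v)=\sum_{x\in N_D(v)}f(x)$ (empty sum $0$); $f$ is $D$-antimagic if distinct vertices have distinct $D$-weights, and the graph is $D$-antimagic if such an $f$ exists. The unidirectional cycle $\overrightarrow{C_n}$ ($n\ge3$) has vertices $v_1,\dots,v_n$ and arcs $(v_i,v_{i+1})$ for $1\le i\le n-1$ and $(v_n,v_1)$; $d(v_i,v_j)=(j-i)\bmod n$. *)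

theory Defs
  imports Main
begin

definition nbhd :: "('v \<Rightarrow> 'v \<Rightarrow> nat) \<Rightarrow> 'v set \<Rightarrow> nat set \<Rightarrow> 'v \<Rightarrow> 'v set" where
  "nbhd dist V D v = {y \<in> V. dist v y \<in> D}"

definition D_weight :: "('v \<Rightarrow> 'v \<Rightarrow> nat) \<Rightarrow> 'v set \<Rightarrow> nat set \<Rightarrow> ('v \<Rightarrow> nat) \<Rightarrow> 'v \<Rightarrow> nat" where
  "D_weight dist V D f v = (\<Sum>x\<in>nbhd dist V D v. f x)"

definition D_antimagic_labeling :: "('v \<Rightarrow> 'v \<Rightarrow> nat) \<Rightarrow> 'v set \<Rightarrow> nat set \<Rightarrow> ('v \<Rightarrow> nat) \<Rightarrow> bool" where
  "D_antimagic_labeling dist V D f \<longleftrightarrow>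
     bij_betw f V {1..card V} \<and> inj_on (D_weight dist V D f) V"

definition D_antimagic :: "('v \<Rightarrow> 'v \<Rightarrow> nat) \<Rightarrow> 'v set \<Rightarrow> nat set \<Rightarrow> bool" where
  "D_antimagic dist V D \<longleftrightarrow> (\<exists>f. D_antimagic_labeling dist V D f)"

(* Unidirectional cycle C_n: vertex v_{i+1} is represented by i \<in> {0..<n};
   d(v_i, v_j) = (j - i) mod n. *)
definition cyc_vertices :: "nat \<Rightarrow> nat set" where
  "cyc_vertices n = {0..<n}"

definition cyc_dist :: "nat \<Rightarrow> nat \<Rightarrow> nat \<Rightarrow> nat" where
  "cyc_dist n i j = nat ((int j - int i) mod int n)"

definition cycle_D_antimagic :: "nat \<Rightarrow> nat set \<Rightarrow> bool" where
  "cycle_D_antimagic n D = D_antimagic (cyc_dist n) (cyc_vertices n) D"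

end

theory Submission
  imports Defs
begin

text \<open>
  Through \<open>D = {a, a + k}\<close> vertex \<open>i\<close> sees exactly the vertices \<open>i + a\<close> and \<open>i + a + k\<close>
  (mod \<open>n\<close>), so its \<open>D\<close>-weight is \<open>g(i + a)\<close> with \<open>g(j) = f(j) + f(j + k)\<close>: up to a rotation
  of the cycle it suffices to find a bijective labeling for which \<open>g\<close> is injective. Passing to
  the complement of \<open>D\<close> turns every weight \<open>w\<close> into \<open>S - w\<close>, with \<open>S\<close> the sum of all labels,
  which preserves distinctness. For odd \<open>n\<close> the labeling \<open>f(j) = j + 1\<close> works: \<open>g(j)\<close> is
  \<open>2j + k + 2\<close>, or \<open>2j + k + 2 - n\<close> when \<open>j + k\<close> wraps around, and these have different
  parities. For even \<open>n\<close> they have the same parity; this is repaired by permuting a short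
  initial block of labels so that the wrapped sums move by an odd amount. A few small cycles
  are checked directly.
\<close>

lemma cyc_dist_eq_mod:
  assumes "i < n" "y < n"
  shows "cyc_dist n i y = (y + n - i) mod n"
proof -
  have "int y - int i + int n = int (y + n - i)" using assms by simp
  then have "(int y - int i) mod int n = int ((y + n - i) mod n)"
    by (metis mod_add_self2 of_nat_mod)
  then show ?thesis unfolding cyc_dist_def by simp
qed

lemma cyc_dist_eq_iff:
  assumes "i < n" "y < n" "d < n"
  shows "cyc_dist n i y = d \<longleftrightarrow> y = (i + d) mod n"
proof -
  have "(y + n - i) mod n = d \<longleftrightarrow> y = (i + d) mod n"
    using assms by (auto simp: mod_if split: if_splits)
  then show ?thesis using cyc_dist_eq_mod[OF assms(1,2)] by simp
qed

lemma cyc_dist_less: "0 < n \<Longrightarrow> cyc_dist n i y < n"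
  unfolding cyc_dist_def by (simp add: nat_less_iff)

lemma nbhd_diff:
  assumes "\<forall>y\<in>V. dist v y \<in> U"
  shows "nbhd dist V (U - D) v = V - nbhd dist V D v"
  using assms unfolding nbhd_def by auto

lemma D_antimagic_labeling_complement:
  assumes f: "D_antimagic_labeling dist V D f" and "finite V"
    and U: "\<forall>v\<in>V. \<forall>y\<in>V. dist v y \<in> U"
  shows "D_antimagic_labeling dist V (U - D) f"
proof -
  have weight: "D_weight dist V (U - D) f v = sum f V - D_weight dist V D f v" if "v \<in> V" for v
    unfolding D_weight_def nbhd_diff[of V dist v U D, OF bspec[OF U that]]
    by (rule sum_diff_nat) (auto simp: nbhd_def \<open>finite V\<close>)
  have bound: "D_weight dist V D f v \<le> sum f V" for v
    unfolding D_weight_def nbhd_def by (rule sum_mono2) (auto simp: \<open>finite V\<close>)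
  have "inj_on (\<lambda>v. sum f V - D_weight dist V D f v) V"
    using f bound unfolding D_antimagic_labeling_def inj_on_def
    by (metis diff_diff_cancel)
  then show ?thesis
    using f weight unfolding D_antimagic_labeling_def by (simp cong: inj_on_cong)
qed

lemma nbhd_cycle_pair:
  assumes "i < n" "a < n"
  shows "nbhd (cyc_dist n) {0..<n} {a, (a + k) mod n} i = {(i + a) mod n, (i + a + k) mod n}"
proof -
  have "(i + (a + k) mod n) mod n = (i + a + k) mod n" by (simp add: mod_simps add.assoc)
  then show ?thesis
    using assms cyc_dist_eq_iff[OF assms(1), of _ a] cyc_dist_eq_iff[OF assms(1), of _ "(a + k) mod n"]
    unfolding nbhd_def by auto
qed

lemma inj_on_rotation: "inj_on (\<lambda>i. (i + a) mod n) {0..<n::nat}"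
proof (rule inj_onI)
  fix x y assume "x \<in> {0..<n}" "y \<in> {0..<n}" and eq: "(x + a) mod n = (y + a) mod n"
  obtain q1 q2 where "x + a + n * q1 = y + a + n * q2"
    using nat_mod_eq_iff[THEN iffD1, OF eq] by blast
  then have "x mod n = y mod n"
    using nat_mod_eq_iff by auto
  with \<open>x \<in> {0..<n}\<close> \<open>y \<in> {0..<n}\<close> show "x = y" by simp
qed

text \<open>In the paper's terms, \<open>f\<close> is a \<open>{0, k}\<close>-antimagic labeling of the cycle.\<close>

definition cyclic_pair_sum_labeling :: "nat \<Rightarrow> nat \<Rightarrow> (nat \<Rightarrow> nat) \<Rightarrow> bool" where
  "cyclic_pair_sum_labeling n k f \<longleftrightarrow>
     bij_betw f {0..<n} {1..n} \<and> inj_on (\<lambda>j. f j + f ((j + k) mod n)) {0..<n}"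

lemma cycle_pair_antimagic_labeling:
  assumes f: "cyclic_pair_sum_labeling n k f" and k: "0 < k" "k < n" and "a < n"
  shows "D_antimagic_labeling (cyc_dist n) {0..<n} {a, (a + k) mod n} f"
proof -
  define r where "r i = (i + a) mod n" for i
  have r_less: "r i < n" for i using k unfolding r_def by simp
  have weight: "D_weight (cyc_dist n) {0..<n} {a, (a + k) mod n} f i = f (r i) + f ((r i + k) mod n)"
    if "i < n" for i
  proof -
    have "(r i + k) mod n = (i + a + k) mod n" unfolding r_def by (simp add: mod_simps)
    moreover have "r i \<noteq> (r i + k) mod n" using r_less[of i] k by (auto simp: mod_if)
    ultimately show ?thesis
      unfolding D_weight_def nbhd_cycle_pair[OF that \<open>a < n\<close>] by (simp add: r_def)
  qed
  have "inj_on ((\<lambda>j. f j + f ((j + k) mod n)) \<circ> r) {0..<n}"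
    using f inj_on_rotation r_less unfolding cyclic_pair_sum_labeling_def r_def
    by (intro comp_inj_on) (auto intro: inj_on_subset)
  moreover have "inj_on (D_weight (cyc_dist n) {0..<n} {a, (a + k) mod n} f) {0..<n}
    \<longleftrightarrow> inj_on ((\<lambda>j. f j + f ((j + k) mod n)) \<circ> r) {0..<n}"
    by (rule inj_on_cong) (simp add: weight)
  ultimately show ?thesis
    using f unfolding D_antimagic_labeling_def cyclic_pair_sum_labeling_def by simp
qed

lemma cycle_pair_and_complement_antimagic:
  assumes "cyclic_pair_sum_labeling n k f" "0 < k" "k < n" "a < n"
  shows "cycle_D_antimagic n {a, (a + k) mod n}
    \<and> cycle_D_antimagic n ({0..<n} - {a, (a + k) mod n})"
proof -
  have pair: "D_antimagic_labeling (cyc_dist n) {0..<n} {a, (a + k) mod n} f"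
    by (rule cycle_pair_antimagic_labeling[OF assms])
  have "D_antimagic_labeling (cyc_dist n) {0..<n} ({0..<n} - {a, (a + k) mod n}) f"
    using assms(3) by (intro D_antimagic_labeling_complement[OF pair]) (auto simp: cyc_dist_less)
  with pair show ?thesis
    unfolding cycle_D_antimagic_def D_antimagic_def cyc_vertices_def by blast
qed

lemma cyclic_pair_sum_labeling_odd:
  assumes "odd n" "k < n"
  shows "cyclic_pair_sum_labeling n k Suc"
  unfolding cyclic_pair_sum_labeling_def
proof
  show "bij_betw Suc {0..<n} {1..n}"
    by (simp add: bij_betw_def image_Suc_atLeastLessThan atLeastLessThanSuc_atLeastAtMost)
  show "inj_on (\<lambda>j. Suc j + Suc ((j + k) mod n)) {0..<n}"
  proof (rule inj_onI)
    fix x y assume "x \<in> {0..<n}" "y \<in> {0..<n}"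
      and "Suc x + Suc ((x + k) mod n) = Suc y + Suc ((y + k) mod n)"
    moreover have "(j + k) mod n = (if j + k < n then j + k else j + k - n)" if "j < n" for j
      using that \<open>k < n\<close> by (cases "j + k < n") (simp_all add: le_mod_geq)
    ultimately have eq: "x + (if x + k < n then x + k else x + k - n) = y + (if y + k < n then y + k else y + k - n)"
      by simp
    have "2 * x \<noteq> 2 * y + n" "2 * y \<noteq> 2 * x + n"
      using \<open>odd n\<close> by presburger+
    with eq \<open>x \<in> {0..<n}\<close> \<open>y \<in> {0..<n}\<close> show "x = y"
      by (auto split: if_splits)
  qed
qed

lemma distinct_set_if_sort_eq_upt:
  "sort L = [1..<length L + 1] \<Longrightarrow> distinct L \<and> set L = {1..length L}"
  by (metis atLeastLessThanSuc_atLeastAtMost distinct_sort distinct_upt set_sort set_upt Suc_eq_plus1)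

definition prefix_labeling :: "nat list \<Rightarrow> nat \<Rightarrow> nat" where
  "prefix_labeling L j = (if j < length L then L ! j else Suc j)"

lemma bij_betw_prefix_labeling:
  assumes perm: "sort L = [1..<length L + 1]" and "length L \<le> n"
  shows "bij_betw (prefix_labeling L) {0..<n} {1..n}"
proof -
  have set_L: "set L = {1..length L}"
    using distinct_set_if_sort_eq_upt[OF perm] by simp
  have "prefix_labeling L ` {0..<n} = {1..n}"
  proof
    show "prefix_labeling L ` {0..<n} \<subseteq> {1..n}"
      using set_L \<open>length L \<le> n\<close> nth_mem[of _ L] by (fastforce simp: prefix_labeling_def)
    show "{1..n} \<subseteq> prefix_labeling L ` {0..<n}"
    proof
      fix v assume v: "v \<in> {1..n}"
      show "v \<in> prefix_labeling L ` {0..<n}"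
      proof (cases "v \<le> length L")
        case True
        then obtain j where "j < length L" "L ! j = v"
          using v set_L by (metis atLeastAtMost_iff in_set_conv_nth)
        then show ?thesis
          using \<open>length L \<le> n\<close> by (force simp: prefix_labeling_def)
      next
        case False
        then have "\<not> v - 1 < length L" by linarith
        then have "prefix_labeling L (v - 1) = v"
          unfolding prefix_labeling_def using False by simp
        moreover have "v - 1 \<in> {0..<n}" using v by auto
        ultimately show ?thesis by (metis image_eqI)
      qed
    qed
  qed
  then show ?thesis
    by (simp add: bij_betw_def eq_card_imp_inj_on)
qed

lemma cyclic_pair_sum_labeling_prefix:
  fixes L :: "nat list" and n k c :: nat
  defines "f \<equiv> prefix_labeling L" and "m \<equiv> length L"
  assumes "even n" "odd c" and k_le: "k \<le> m" and mk_le: "m + k \<le> n"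
    and perm: "sort L = [1..<m + 1]"
    and head: "take k L = [c + 1..<c + k + 1]"
    and prefix_distinct: "distinct (map (\<lambda>j. f j + f (j + k)) [0..<m])"
    \<comment> \<open>the prefix sums lie below all later sums \<open>2j + k + 2\<close> and all wrapped sums \<open>2j + k + 2 + c - n\<close>\<close>
    and prefix_small: "\<forall>s\<in>set (map (\<lambda>j. f j + f (j + k)) [0..<m]). s < 2 * m + k + 2 \<and> s + k < n + c + 2"
  shows "cyclic_pair_sum_labeling n k f"
  unfolding cyclic_pair_sum_labeling_def
proof
  show "bij_betw f {0..<n} {1..n}"
    using bij_betw_prefix_labeling perm mk_le unfolding f_def m_def by simp
  define T where "T j = f j + f (j + k)" for j
  have sum: "f j + f ((j + k) mod n) =
      (if j < m then T j else if j + k < n then 2 * j + k + 2 else 2 * j + k + 2 + c - n)"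
    if "j < n" for j
  proof (cases "j + k < n")
    case True
    then show ?thesis
      unfolding T_def f_def prefix_labeling_def m_def[symmetric] by simp
  next
    case False
    then have "(j + k) mod n = j + k - n" "j + k - n < k"
      using that k_le mk_le by (simp_all add: mod_if)
    moreover have "L ! (j + k - n) = j + k - n + 1 + c"
      using nth_take[of "j + k - n" k L] \<open>j + k - n < k\<close> head by (simp del: upt_Suc)
    moreover have "m \<le> j" using False mk_le by linarith
    ultimately show ?thesis
      using False k_le unfolding f_def prefix_labeling_def m_def[symmetric] by simp
  qed
  have T_inj: "inj_on T {0..<m}"
    using prefix_distinct unfolding T_def distinct_map by simp
  show "inj_on (\<lambda>j. f j + f ((j + k) mod n)) {0..<n}"
  proof (rule inj_onI)
    fix x y assume x: "x \<in> {0..<n}" and y: "y \<in> {0..<n}"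
      and eq: "f x + f ((x + k) mod n) = f y + f ((y + k) mod n)"
    have eq_sum: "(if x < m then T x else if x + k < n then 2 * x + k + 2 else 2 * x + k + 2 + c - n) =
        (if y < m then T y else if y + k < n then 2 * y + k + 2 else 2 * y + k + 2 + c - n)"
      using eq sum[of x] sum[of y] x y by simp
    have parity: "2 * x + n \<noteq> 2 * y + c" "2 * y + n \<noteq> 2 * x + c"
      using \<open>even n\<close> \<open>odd c\<close> by presburger+
    have small: "T j < 2 * m + k + 2" "T j + k < n + c + 2" if "j < m" for j
      using prefix_small that unfolding T_def by auto
    show "x = y"
    proof (cases "x < m"; cases "y < m")
      assume "x < m" "y < m"
      then show ?thesis using eq_sum T_inj by (simp add: inj_on_def)
    next
      assume "x < m" "\<not> y < m"
      then show ?thesis using eq_sum small[of x] y by (auto split: if_splits)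
    next
      assume "\<not> x < m" "y < m"
      then show ?thesis using eq_sum small[of y] x by (auto split: if_splits)
    next
      assume "\<not> x < m" "\<not> y < m"
      then show ?thesis using eq_sum parity x y by (auto split: if_splits)
    qed
  qed
qed

lemma cyclic_pair_sum_labeling_nth:
  assumes "length L = n" and perm: "sort L = [1..<n + 1]"
    and "distinct (map (\<lambda>j. L ! j + L ! ((j + k) mod n)) [0..<n])"
  shows "cyclic_pair_sum_labeling n k (nth L)"
proof -
  have "bij_betw (nth L) {0..<length L} (set L)"
    using distinct_set_if_sort_eq_upt[OF perm[folded \<open>length L = n\<close>]] by (intro bij_betw_nth) auto
  then show ?thesis
    using assms distinct_set_if_sort_eq_upt[OF perm[folded \<open>length L = n\<close>]]
    unfolding cyclic_pair_sum_labeling_def distinct_map by simp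
qed


lemma cyclic_pair_sum_labeling_exists_1:
  assumes "3 \<le> n"
  shows "\<exists>f. cyclic_pair_sum_labeling n 1 f"
proof (cases "even n")
  case True
  with assms have "4 \<le> n" by presburger
  with True have "cyclic_pair_sum_labeling n 1 (prefix_labeling [2, 1])"
    by (intro cyclic_pair_sum_labeling_prefix[where c = 1]) (simp_all add: prefix_labeling_def)
  then show ?thesis by blast
next
  case False
  then show ?thesis using assms cyclic_pair_sum_labeling_odd[of n 1] by auto
qed

lemma cyclic_pair_sum_labeling_exists_2:
  assumes "3 \<le> n" "n \<noteq> 4"
  shows "\<exists>f. cyclic_pair_sum_labeling n 2 f"
proof (cases "even n")
  case True
  with assms have "n = 6 \<or> 8 \<le> n" by presburger
  then show ?thesis
  proof
    assume "n = 6"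
    have "cyclic_pair_sum_labeling 6 2 (nth [1, 3, 2, 5, 4, 6])"
      by (rule cyclic_pair_sum_labeling_nth) (simp_all add: upt_rec)
    with \<open>n = 6\<close> show ?thesis by blast
  next
    assume "8 \<le> n"
    with True have "cyclic_pair_sum_labeling n 2 (prefix_labeling [2, 3, 1])"
      by (intro cyclic_pair_sum_labeling_prefix[where c = 1]) (simp_all add: prefix_labeling_def upt_rec)
    then show ?thesis by blast
  qed
next
  case False
  then show ?thesis using assms cyclic_pair_sum_labeling_odd[of n 2] by auto
qed

lemma cyclic_pair_sum_labeling_exists_3:
  assumes "4 \<le> n" "n \<noteq> 6"
  shows "\<exists>f. cyclic_pair_sum_labeling n 3 f"
proof (cases "even n")
  case True
  with assms have "n = 4 \<or> n = 8 \<or> 10 \<le> n" by presburger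
  then show ?thesis
  proof (elim disjE)
    assume "n = 4"
    have "cyclic_pair_sum_labeling 4 3 (nth [1, 2, 4, 3])"
      by (rule cyclic_pair_sum_labeling_nth) (simp_all add: upt_rec)
    with \<open>n = 4\<close> show ?thesis by blast
  next
    assume "n = 8"
    have "cyclic_pair_sum_labeling 8 3 (nth [1, 2, 3, 5, 6, 4, 7, 8])"
      by (rule cyclic_pair_sum_labeling_nth) (simp_all add: upt_rec)
    with \<open>n = 8\<close> show ?thesis by blast
  next
    assume "10 \<le> n"
    with True have "cyclic_pair_sum_labeling n 3 (prefix_labeling [4, 5, 6, 2, 3, 1])"
      by (intro cyclic_pair_sum_labeling_prefix[where c = 3]) (simp_all add: prefix_labeling_def upt_rec)
    then show ?thesis by blast
  qed
next
  case False
  then show ?thesis using assms cyclic_pair_sum_labeling_odd[of n 3] by auto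
qed

theorem mainTheorem14:
  fixes n a :: nat
  assumes "n \<ge> 3" and "a \<le> n - 1"
  shows "cycle_D_antimagic n {a, (a + 1) mod n}
    \<and> (n \<noteq> 4 \<longrightarrow> cycle_D_antimagic n {a, (a + 2) mod n})
    \<and> (n \<ge> 4 \<and> n \<noteq> 6 \<longrightarrow> cycle_D_antimagic n {a, (a + 3) mod n})
    \<and> ({0..<n} - {a, (a + 1) mod n} \<noteq> {} \<longrightarrow>
           cycle_D_antimagic n ({0..<n} - {a, (a + 1) mod n}))
    \<and> (n \<noteq> 4 \<and> {0..<n} - {a, (a + 2) mod n} \<noteq> {} \<longrightarrow>
           cycle_D_antimagic n ({0..<n} - {a, (a + 2) mod n}))
    \<and> (n \<ge> 4 \<and> n \<noteq> 6 \<and> {0..<n} - {a, (a + 3) mod n} \<noteq> {} \<longrightarrow>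
           cycle_D_antimagic n ({0..<n} - {a, (a + 3) mod n}))"
proof -
  have pair: "cycle_D_antimagic n {a, (a + k) mod n}
      \<and> cycle_D_antimagic n ({0..<n} - {a, (a + k) mod n})"
    if "\<exists>f. cyclic_pair_sum_labeling n k f" "0 < k" "k < n" for k
    using that cycle_pair_and_complement_antimagic assms by fastforce
  show ?thesis
    using pair[OF cyclic_pair_sum_labeling_exists_1] pair[OF cyclic_pair_sum_labeling_exists_2]
      pair[OF cyclic_pair_sum_labeling_exists_3] assms
    by auto
qed

end
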